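(* Let $G$ be a finite, simple, connected graph and let $k\geq 3$ be an integer. Then $$\gamma_{B_k}(G)=\min\{\gamma_{B_k}(T)\colon T \text{ is a spanning tree of } G\}.$$
   Context: $d(u,v)$ denotes the distance in the graph. For a connected graph $G$ and an integer $k\ge 1$, a function $f\colon V(G)\to\{0,1,\dots,k\}$ is a dominating $k$-broadcast on $G$ if for every $u\in V(G)$ there is a vertex $v$ with $f(v)\geq 1$ and $d(u,v)\leq f(v)$. Its cost is $\omega(f)=\sum_{u\in V(G)}f(u)$, and the dominating $k$-broadcast number $\gamma_{B_k}(G)$ is the minimum cost of a dominating $k$-broadcast on $G$. *)

theory Defs
  imports Main
begin

definition simple_graph :: "'a set \<Rightarrow> 'a set set \<Rightarrow> bool" where
  "simple_graph V E \<longleftrightarrow> finite V \<and>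
     (\<forall>e\<in>E. \<exists>u v. u \<noteq> v \<and> u \<in> V \<and> v \<in> V \<and> e = {u, v})"

definition walk :: "'a set set \<Rightarrow> 'a list \<Rightarrow> bool" where
  "walk E xs \<longleftrightarrow> xs \<noteq> [] \<and> (\<forall>i. Suc i < length xs \<longrightarrow> {xs ! i, xs ! Suc i} \<in> E)"

definition connected_graph :: "'a set \<Rightarrow> 'a set set \<Rightarrow> bool" where
  "connected_graph V E \<longleftrightarrow> V \<noteq> {} \<and>
     (\<forall>u\<in>V. \<forall>v\<in>V. \<exists>xs. walk E xs \<and> hd xs = u \<and> last xs = v)"

definition dist :: "'a set set \<Rightarrow> 'a \<Rightarrow> 'a \<Rightarrow> nat" where
  "dist E u v = (LEAST n. \<exists>xs. walk E xs \<and> hd xs = u \<and> last xs = v \<and> length xs = Suc n)"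

definition is_cycle :: "'a set set \<Rightarrow> 'a list \<Rightarrow> bool" where
  "is_cycle E xs \<longleftrightarrow> length xs \<ge> 3 \<and> distinct xs \<and> walk E xs \<and> {last xs, hd xs} \<in> E"

definition acyclic_graph :: "'a set set \<Rightarrow> bool" where
  "acyclic_graph E \<longleftrightarrow> (\<nexists>xs. is_cycle E xs)"

definition is_tree :: "'a set \<Rightarrow> 'a set set \<Rightarrow> bool" where
  "is_tree V E \<longleftrightarrow> simple_graph V E \<and> connected_graph V E \<and> acyclic_graph E"

definition spanning_tree :: "'a set \<Rightarrow> 'a set set \<Rightarrow> 'a set set \<Rightarrow> bool" where
  "spanning_tree V E F \<longleftrightarrow> F \<subseteq> E \<and> is_tree V F"

definition dom_broadcast :: "'a set \<Rightarrow> 'a set set \<Rightarrow> nat \<Rightarrow> ('a \<Rightarrow> nat) \<Rightarrow> bool" where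
  "dom_broadcast V E k f \<longleftrightarrow> (\<forall>v\<in>V. f v \<le> k) \<and>
     (\<forall>u\<in>V. \<exists>v\<in>V. f v \<ge> 1 \<and> dist E u v \<le> f v)"

definition broadcast_cost :: "'a set \<Rightarrow> ('a \<Rightarrow> nat) \<Rightarrow> nat" where
  "broadcast_cost V f = (\<Sum>v\<in>V. f v)"

definition gamma_Bk :: "'a set \<Rightarrow> 'a set set \<Rightarrow> nat \<Rightarrow> nat" where
  "gamma_Bk V E k = Min {broadcast_cost V f | f. dom_broadcast V E k f}"

end

theory Submission
  imports Defs
begin

text \<open>Take a minimum dominating \<open>k\<close>-broadcast \<open>f\<close> on \<open>G\<close> and let the surplus of a
  vertex \<open>u\<close> be \<open>m(u) = max {f(v) - d(u,v) | f(v) \<ge> 1}\<close>; domination says \<open>m(u) \<ge> 0\<close>.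
  A vertex that is not a broadcasting vertex with \<open>f(u) = m(u)\<close> has a neighbour on a shortest
  path towards a vertex realising \<open>m(u)\<close>, and that neighbour has strictly larger surplus.
  Choosing one such parent for every such vertex gives a forest (on a cycle, the vertex of
  least surplus would need both of its cycle neighbours as its parent), which extends to a
  spanning tree \<open>T\<close>. Following parents from \<open>u\<close> reaches a vertex \<open>r\<close> with \<open>f(r) = m(r)\<close> in at
  most \<open>m(r) - m(u) \<le> f(r)\<close> steps, so \<open>f\<close> also dominates \<open>T\<close> and \<open>\<gamma>(T) \<le> \<gamma>(G)\<close>.
  Conversely, distances in any spanning tree are at least those in \<open>G\<close>, so \<open>\<gamma>(G) \<le> \<gamma>(T)\<close>.\<close>

lemma simple_graph_finite_edges: "simple_graph V E \<Longrightarrow> finite E"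
  unfolding simple_graph_def by (auto intro: finite_subset[of E "Pow V"])

lemma simple_graph_subset: "simple_graph V E \<Longrightarrow> F \<subseteq> E \<Longrightarrow> simple_graph V F"
  unfolding simple_graph_def by blast

lemma simple_graph_edge_in_vertices: "simple_graph V E \<Longrightarrow> {x, y} \<in> E \<Longrightarrow> y \<in> V"
  unfolding simple_graph_def by (auto simp: doubleton_eq_iff)

lemma walk_Nil [simp]: "\<not> walk E []"
  by (simp add: walk_def)

lemma walk_singleton [simp]: "walk E [x]"
  by (simp add: walk_def)

lemma walk_Cons_Cons_iff [simp]: "walk E (x # y # ys) \<longleftrightarrow> {x, y} \<in> E \<and> walk E (y # ys)"
proof
  assume w: "walk E (x # y # ys)"
  have "{(y # ys) ! i, (y # ys) ! Suc i} \<in> E" if "Suc i < length (y # ys)" for i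
    using w that unfolding walk_def by (metis Suc_less_eq length_Cons nth_Cons_Suc)
  then show "{x, y} \<in> E \<and> walk E (y # ys)"
    using w unfolding walk_def by force
next
  assume "{x, y} \<in> E \<and> walk E (y # ys)"
  then show "walk E (x # y # ys)"
    unfolding walk_def by (auto simp: nth_Cons split: nat.split)
qed

lemma walk_Cons: "walk E xs \<Longrightarrow> {x, hd xs} \<in> E \<Longrightarrow> walk E (x # xs)"
  by (cases xs) simp_all

lemma walk_snoc: "walk E xs \<Longrightarrow> {last xs, x} \<in> E \<Longrightarrow> walk E (xs @ [x])"
proof (induction xs rule: induct_list012)
  case (3 y z zs)
  then show ?case by simp
qed (auto simp: walk_def)

lemma walk_mono: "walk F xs \<Longrightarrow> F \<subseteq> E \<Longrightarrow> walk E xs"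
  by (auto simp: walk_def)

definition adjacent :: "'a set set \<Rightarrow> 'a \<Rightarrow> 'a \<Rightarrow> bool" where
  "adjacent E a b \<longleftrightarrow> {a, b} \<in> E"

lemma symp_adjacent: "symp (adjacent E)"
  by (auto simp: symp_def adjacent_def insert_commute)

lemma reachable_sym: "(adjacent E)\<^sup>*\<^sup>* a b \<Longrightarrow> (adjacent E)\<^sup>*\<^sup>* b a"
  by (rule sympD[OF symp_rtranclp[OF symp_adjacent]])

lemma reachable_iff_walk: "(adjacent E)\<^sup>*\<^sup>* u v \<longleftrightarrow> (\<exists>xs. walk E xs \<and> hd xs = u \<and> last xs = v)"
proof
  assume "(adjacent E)\<^sup>*\<^sup>* u v"
  then show "\<exists>xs. walk E xs \<and> hd xs = u \<and> last xs = v"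
  proof (induction rule: converse_rtranclp_induct)
    case base
    show ?case by (intro exI[of _ "[v]"]) simp
  next
    case (step y z)
    then obtain xs where "walk E xs" "hd xs = z" "last xs = v" by blast
    moreover have "xs \<noteq> []" using \<open>walk E xs\<close> by (simp add: walk_def)
    ultimately show ?case using step(1)
      by (intro exI[of _ "y # xs"]) (auto simp: adjacent_def intro: walk_Cons)
  qed
next
  assume "\<exists>xs. walk E xs \<and> hd xs = u \<and> last xs = v"
  then obtain xs where "walk E xs" "hd xs = u" "last xs = v" by blast
  moreover have "walk E xs \<Longrightarrow> (adjacent E)\<^sup>*\<^sup>* (hd xs) (last xs)"
    by (induction xs rule: induct_list012)
      (auto simp: adjacent_def intro: converse_rtranclp_into_rtranclp)
  ultimately show "(adjacent E)\<^sup>*\<^sup>* u v" by blast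
qed

lemma dist_le_walk:
  assumes "walk E xs" "hd xs = u" "last xs = v"
  shows "dist E u v < length xs"
proof -
  have "length xs = Suc (length xs - 1)"
    using assms(1) by (cases xs) auto
  then have "dist E u v \<le> length xs - 1"
    unfolding dist_def using assms by (intro Least_le exI[of _ xs]) auto
  then show ?thesis using assms(1) by (cases xs) auto
qed

lemma dist_self [simp]: "dist E u u = 0"
  using dist_le_walk[of E "[u]" u u] by simp

lemma shortest_walk:
  assumes "connected_graph V E" "u \<in> V" "v \<in> V"
  obtains xs where "walk E xs" "hd xs = u" "last xs = v" "length xs = Suc (dist E u v)"
proof -
  obtain xs where xs: "walk E xs" "hd xs = u" "last xs = v"
    using assms unfolding connected_graph_def by blast
  then have "\<exists>n xs. walk E xs \<and> hd xs = u \<and> last xs = v \<and> length xs = Suc n"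
    by (intro exI[of _ "length xs - 1"] exI[of _ xs]) (cases xs, auto)
  then have "\<exists>xs. walk E xs \<and> hd xs = u \<and> last xs = v \<and> length xs = Suc (dist E u v)"
    unfolding dist_def by (rule LeastI_ex)
  then show thesis using that by blast
qed

lemma dist_eq_0_iff:
  assumes "connected_graph V E" "u \<in> V" "v \<in> V"
  shows "dist E u v = 0 \<longleftrightarrow> u = v"
proof
  assume "dist E u v = 0"
  with shortest_walk[OF assms] obtain xs where "hd xs = u" "last xs = v" "length xs = 1"
    by (metis One_nat_def)
  then show "u = v" by (cases xs) auto
qed simp

lemma dist_Suc_neighbour:
  assumes "connected_graph V E" "u \<in> V" "v \<in> V" "dist E u v = Suc d"
  obtains w where "{u, w} \<in> E" "dist E w v \<le> d"
proof -
  obtain xs where xs: "walk E xs" "hd xs = u" "last xs = v" "length xs = Suc (Suc d)"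
    using shortest_walk[OF assms(1-3)] assms(4) by metis
  then obtain w ys where "xs = u # w # ys"
    by (cases xs; cases "tl xs") auto
  with xs show thesis
    using that dist_le_walk[of E "w # ys" w v] by auto
qed

lemma dist_subgraph_le:
  assumes "F \<subseteq> E" "connected_graph V F" "u \<in> V" "v \<in> V"
  shows "dist E u v \<le> dist F u v"
proof -
  obtain xs where "walk F xs" "hd xs = u" "last xs = v" "length xs = Suc (dist F u v)"
    using shortest_walk[OF assms(2-4)] by metis
  then show ?thesis using dist_le_walk[of E xs u v] walk_mono[OF _ assms(1)] by fastforce
qed

lemma is_cycle_rotate1:
  assumes "is_cycle E xs"
  shows "is_cycle E (rotate1 xs)"
proof -
  obtain x y zs where xs: "xs = x # y # zs"
    using assms unfolding is_cycle_def by (auto simp: numeral_3_eq_3 Suc_le_length_iff)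
  have "walk E (y # zs @ [x])"
    using assms walk_snoc[of E "y # zs" x] unfolding is_cycle_def xs by (simp add: insert_commute)
  then show ?thesis
    using assms unfolding is_cycle_def xs by (auto simp: insert_commute)
qed

lemma is_cycle_rotate: "is_cycle E xs \<Longrightarrow> is_cycle E (rotate n xs)"
  by (induction n) (simp_all add: is_cycle_rotate1)

lemma is_cycle_rotate_to_vertex:
  assumes "is_cycle E xs" "x \<in> set xs"
  obtains y zs where "is_cycle E (x # y # zs)" "set (x # y # zs) = set xs"
proof -
  obtain i where "i < length xs" "xs ! i = x"
    using assms(2) by (auto simp: in_set_conv_nth)
  moreover have "xs \<noteq> []" using assms(2) by auto
  ultimately have "hd (rotate i xs) = x"
    using hd_rotate_conv_nth[of xs i] by simp
  moreover have "is_cycle E (rotate i xs)" "set (rotate i xs) = set xs"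
    using is_cycle_rotate[OF assms(1)] by simp_all
  ultimately obtain ys where ys: "is_cycle E ys" "hd ys = x" "set ys = set xs"
    by blast
  then obtain y zs where "ys = x # y # zs"
    unfolding is_cycle_def by (auto simp: numeral_3_eq_3 Suc_le_length_iff)
  then show thesis using that ys by blast
qed

lemma rotate_Suc_hd_last:
  assumes "Suc i < length xs"
  shows "hd (rotate (Suc i) xs) = xs ! Suc i" "last (rotate (Suc i) xs) = xs ! i"
proof -
  have "xs \<noteq> []" using assms by auto
  then show "hd (rotate (Suc i) xs) = xs ! Suc i"
    using assms hd_rotate_conv_nth[of xs "Suc i"] by (simp del: rotate_Suc)
  have "rotate (Suc i) xs = drop (Suc i) xs @ take (Suc i) xs"
    using assms by (simp add: rotate_drop_take del: rotate_Suc)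
  also have "last \<dots> = last (take (Suc i) xs)"
    using assms by (simp add: last_append)
  also have "\<dots> = xs ! i"
    using assms by (subst last_conv_nth) (auto simp: min_def)
  finally show "last (rotate (Suc i) xs) = xs ! i" .
qed

lemma is_cycle_walk_without_closing_edge:
  assumes "is_cycle E xs"
  shows "walk (E - {{last xs, hd xs}}) xs"
proof -
  let ?n = "length xs"
  have n: "?n \<ge> 3" and d: "distinct xs" and w: "walk E xs"
    using assms unfolding is_cycle_def by auto
  have "{xs ! i, xs ! Suc i} \<noteq> {xs ! (?n - 1), xs ! 0}" if i: "Suc i < ?n" for i
  proof
    assume "{xs ! i, xs ! Suc i} = {xs ! (?n - 1), xs ! 0}"
    then consider "xs ! i = xs ! (?n - 1)" | "xs ! i = xs ! 0" "xs ! Suc i = xs ! (?n - 1)"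
      by (auto simp: doubleton_eq_iff)
    then show False
    proof cases
      case 1
      then have "i = ?n - 1" using i nth_eq_iff_index_eq[OF d, of i "?n - 1"] by simp
      then show False using i by simp
    next
      case 2
      moreover have "0 < ?n" using n by linarith
      ultimately have "i = 0" "Suc i = ?n - 1"
        using i nth_eq_iff_index_eq[OF d, of i 0] nth_eq_iff_index_eq[OF d, of "Suc i" "?n - 1"]
        by simp_all
      then show False using n by simp
    qed
  qed
  then show ?thesis
    using w n unfolding walk_def by (simp add: last_conv_nth hd_conv_nth)
qed

lemma reachable_if_insert_edge_cyclic:
  assumes "acyclic_graph F" "\<not> acyclic_graph (insert {a, b} F)"
  shows "(adjacent F)\<^sup>*\<^sup>* a b"
proof -
  let ?G = "insert {a, b} F"
  obtain xs where xs: "is_cycle ?G xs" "\<not> is_cycle F xs"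
    using assms unfolding acyclic_graph_def by blast
  have "\<exists>ys. is_cycle ?G ys \<and> {last ys, hd ys} = {a, b}"
  proof (cases "{last xs, hd xs} \<in> F")
    case True
    then have "\<not> walk F xs" using xs unfolding is_cycle_def by blast
    then obtain i where i: "Suc i < length xs" "{xs ! i, xs ! Suc i} = {a, b}"
      using xs(1) unfolding is_cycle_def walk_def by auto
    let ?ys = "rotate (Suc i) xs"
    have "{last ?ys, hd ?ys} = {a, b}"
      using rotate_Suc_hd_last[OF i(1)] i(2) by simp
    then show ?thesis
      using is_cycle_rotate[OF xs(1)] by blast
  next
    case False
    then show ?thesis using xs(1) unfolding is_cycle_def by auto
  qed
  then obtain ys where ys: "is_cycle ?G ys" "{last ys, hd ys} = {a, b}" by blast
  have "walk F ys"
    using walk_mono[OF is_cycle_walk_without_closing_edge[OF ys(1)]] ys(2) by auto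
  then have "(adjacent F)\<^sup>*\<^sup>* (hd ys) (last ys)"
    unfolding reachable_iff_walk by blast
  then show ?thesis
    using ys(2) reachable_sym by (auto simp: doubleton_eq_iff)
qed

lemma connected_if_maximal_acyclic:
  assumes "connected_graph V E" "F \<subseteq> E" "acyclic_graph F"
    and maximal: "\<forall>e\<in>E - F. \<not> acyclic_graph (insert e F)"
  shows "connected_graph V F"
proof -
  have "adjacent E \<le> (adjacent F)\<^sup>*\<^sup>*"
  proof (intro predicate2I)
    fix a b assume "adjacent E a b"
    then show "(adjacent F)\<^sup>*\<^sup>* a b"
      using maximal reachable_if_insert_edge_cyclic[OF assms(3)]
      by (cases "{a, b} \<in> F") (auto simp: adjacent_def)
  qed
  then have "(adjacent E)\<^sup>*\<^sup>* \<le> (adjacent F)\<^sup>*\<^sup>*"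
    using rtranclp_mono[of "adjacent E" "(adjacent F)\<^sup>*\<^sup>*"] by simp
  then show ?thesis
    using assms(1) unfolding connected_graph_def reachable_iff_walk[symmetric] by blast
qed

lemma acyclic_extends_to_spanning_tree:
  assumes "simple_graph V E" "connected_graph V E" "F0 \<subseteq> E" "acyclic_graph F0"
  obtains F where "F0 \<subseteq> F" "spanning_tree V E F"
proof -
  let ?S = "{F. F0 \<subseteq> F \<and> F \<subseteq> E \<and> acyclic_graph F}"
  have "finite ?S"
    using simple_graph_finite_edges[OF assms(1)] by (auto intro: finite_subset[of _ "Pow E"])
  moreover have "?S \<noteq> {}" using assms(3,4) by blast
  ultimately obtain F where F: "F \<in> ?S" and max: "\<forall>G\<in>?S. F \<subseteq> G \<longrightarrow> F = G"
    by (auto dest!: finite_has_maximal)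
  have "\<forall>e\<in>E - F. \<not> acyclic_graph (insert e F)"
    using F max by blast
  then have "connected_graph V F"
    using F assms(2) connected_if_maximal_acyclic by blast
  then show thesis
    using F that simple_graph_subset[OF assms(1)] unfolding spanning_tree_def is_tree_def by blast
qed

lemma parent_edges_acyclic:
  fixes m :: "'a \<Rightarrow> 'b::linorder"
  assumes "\<forall>u\<in>N. m u < m (p u)"
  shows "acyclic_graph {{u, p u} | u. u \<in> N}"
  unfolding acyclic_graph_def
proof
  let ?P = "{{u, p u} | u. u \<in> N}"
  assume "\<exists>xs. is_cycle ?P xs"
  then obtain xs where cyc: "is_cycle ?P xs" by blast
  then have "set xs \<noteq> {}" unfolding is_cycle_def by auto
  then have "Min (m ` set xs) \<in> m ` set xs" by simp
  then obtain x where x: "x \<in> set xs" "m x = Min (m ` set xs)" by auto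
  have min: "m x \<le> m y" if "y \<in> set xs" for y
    using that x(2) by simp
  have neighbour: "y = p x" if "{x, y} \<in> ?P" "y \<in> set xs" for y
    using that min assms by (auto simp: doubleton_eq_iff dest!: bspec leD)
  obtain y zs where ys: "is_cycle ?P (x # y # zs)" "set (x # y # zs) = set xs"
    using is_cycle_rotate_to_vertex[OF cyc x(1)] .
  then have "zs \<noteq> []" unfolding is_cycle_def by auto
  then have "walk ?P (x # y # zs)" "{last zs, x} \<in> ?P" "distinct (x # y # zs)"
    using ys(1) unfolding is_cycle_def by simp_all
  then have "{x, y} \<in> ?P" "{x, last zs} \<in> ?P" "y \<notin> set zs" "last zs \<in> set zs"
    using \<open>zs \<noteq> []\<close> by (simp_all add: insert_commute)
  moreover have "y \<in> set xs" "last zs \<in> set xs"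
    unfolding ys(2)[symmetric] using \<open>last zs \<in> set zs\<close> by simp_all
  ultimately show False
    using neighbour[of y] neighbour[of "last zs"] by simp
qed

lemma parent_walk_to_root:
  fixes m :: "'a \<Rightarrow> int"
  assumes bounded: "\<forall>v\<in>V. m v \<le> b"
    and parent: "\<forall>u\<in>N. p u \<in> V \<and> m u < m (p u)"
    and "u \<in> V"
  shows "\<exists>xs. walk {{w, p w} | w. w \<in> N} xs \<and> hd xs = u \<and> last xs \<in> V - N
    \<and> int (length xs) - 1 \<le> m (last xs) - m u"
  using \<open>u \<in> V\<close>
proof (induction "nat (b - m u)" arbitrary: u rule: less_induct)
  case less
  show ?case
  proof (cases "u \<in> N")
    case True
    have "p u \<in> V" "m u < m (p u)"
      using parent True by auto
    moreover have "nat (b - m (p u)) < nat (b - m u)"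
      using calculation bounded by fastforce
    ultimately obtain xs where xs: "walk {{w, p w} | w. w \<in> N} xs" "hd xs = p u"
      "last xs \<in> V - N" "int (length xs) - 1 \<le> m (last xs) - m (p u)"
      using less.hyps by blast
    have "{u, hd xs} \<in> {{w, p w} | w. w \<in> N}"
      unfolding xs(2) using True by (intro CollectI exI[of _ u]) simp
    then have "walk {{w, p w} | w. w \<in> N} (u # xs)"
      by (rule walk_Cons[OF xs(1)])
    moreover have "xs \<noteq> []" using xs(1) by auto
    ultimately show ?thesis
      using xs \<open>m u < m (p u)\<close> by (intro exI[of _ "u # xs"]) auto
  next
    case False
    then show ?thesis
      using less.prems by (intro exI[of _ "[u]"]) simp
  qed
qed

definition broadcast_surplus :: "'a set \<Rightarrow> 'a set set \<Rightarrow> ('a \<Rightarrow> nat) \<Rightarrow> 'a \<Rightarrow> int" where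
  "broadcast_surplus V E f u = Max ((\<lambda>v. int (f v) - int (dist E u v)) ` {v \<in> V. 1 \<le> f v})"

lemma broadcast_surplus_ge:
  assumes "finite V" "v \<in> V" "1 \<le> f v"
  shows "int (f v) - int (dist E u v) \<le> broadcast_surplus V E f u"
  unfolding broadcast_surplus_def using assms by (intro Max_ge) auto

lemma broadcast_surplus_attained:
  assumes "finite V" "\<exists>v\<in>V. 1 \<le> f v"
  obtains v where "v \<in> V" "1 \<le> f v" "broadcast_surplus V E f u = int (f v) - int (dist E u v)"
proof -
  have "broadcast_surplus V E f u \<in> (\<lambda>v. int (f v) - int (dist E u v)) ` {v \<in> V. 1 \<le> f v}"
    unfolding broadcast_surplus_def using assms by (intro Max_in) auto
  then show thesis using that by blast
qed

lemma broadcast_surplus_increases: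
  assumes "finite V" "connected_graph V E" "\<exists>v\<in>V. 1 \<le> f v" "u \<in> V"
    and not_source: "\<not> (1 \<le> f u \<and> int (f u) = broadcast_surplus V E f u)"
  obtains w where "{u, w} \<in> E" "broadcast_surplus V E f u < broadcast_surplus V E f w"
proof -
  obtain v where v: "v \<in> V" "1 \<le> f v"
    "broadcast_surplus V E f u = int (f v) - int (dist E u v)"
    using broadcast_surplus_attained[OF assms(1,3)] by blast
  then have "v \<noteq> u" using not_source by auto
  then obtain d where "dist E u v = Suc d"
    using dist_eq_0_iff[OF assms(2,4) v(1)] by (cases "dist E u v") auto
  then obtain w where "{u, w} \<in> E" "dist E w v \<le> d"
    using dist_Suc_neighbour[OF assms(2,4) v(1)] by blast
  moreover have "int (f v) - int (dist E w v) \<le> broadcast_surplus V E f w"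
    using broadcast_surplus_ge[of V v f E w, OF assms(1) v(1,2)] .
  ultimately show thesis
    using that v(3) \<open>dist E u v = Suc d\<close> by force
qed

lemma dom_broadcast_on_spanning_tree:
  assumes sg: "simple_graph V E" and con: "connected_graph V E"
    and fd: "dom_broadcast V E k f"
  obtains F where "spanning_tree V E F" "dom_broadcast V F k f"
proof -
  let ?m = "broadcast_surplus V E f"
  let ?N = "{u \<in> V. \<not> (1 \<le> f u \<and> int (f u) = ?m u)}"
  have finV: "finite V" using sg simple_graph_def by auto
  have covered: "\<exists>v\<in>V. 1 \<le> f v \<and> dist E u v \<le> f v" if "u \<in> V" for u
    using fd that unfolding dom_broadcast_def by blast
  then have source: "\<exists>v\<in>V. 1 \<le> f v"
    using con unfolding connected_graph_def by blast
  have surplus_nonneg: "0 \<le> ?m u" if "u \<in> V" for u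
    using covered[OF that] broadcast_surplus_ge[OF finV, of _ f E u] by fastforce
  have surplus_le: "?m u \<le> int k" for u
  proof -
    obtain v where "v \<in> V" "?m u = int (f v) - int (dist E u v)"
      using broadcast_surplus_attained[OF finV source] by blast
    then show ?thesis using fd unfolding dom_broadcast_def by force
  qed
  have "\<forall>u\<in>?N. \<exists>w. {u, w} \<in> E \<and> ?m u < ?m w"
    using broadcast_surplus_increases[OF finV con source] by blast
  then obtain p where p: "\<forall>u\<in>?N. {u, p u} \<in> E \<and> ?m u < ?m (p u)"
    by metis
  let ?F0 = "{{u, p u} | u. u \<in> ?N}"
  have "?F0 \<subseteq> E" "acyclic_graph ?F0"
    using p parent_edges_acyclic[of ?N ?m p] by auto
  then obtain F where F: "?F0 \<subseteq> F" "spanning_tree V E F"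
    using acyclic_extends_to_spanning_tree[OF sg con] by blast
  have parent: "\<forall>u\<in>?N. p u \<in> V \<and> ?m u < ?m (p u)"
    using p simple_graph_edge_in_vertices[OF sg] by blast
  have "dom_broadcast V F k f"
    unfolding dom_broadcast_def
  proof (intro conjI ballI)
    fix u assume u: "u \<in> V"
    then obtain xs where xs: "walk ?F0 xs" "hd xs = u" "last xs \<in> V - ?N"
      "int (length xs) - 1 \<le> ?m (last xs) - ?m u"
      using parent_walk_to_root[of V ?m "int k" ?N p u] surplus_le parent by blast
    have "dist F u (last xs) < length xs"
      using dist_le_walk[OF walk_mono[OF xs(1) F(1)] xs(2)] by simp
    then show "\<exists>v\<in>V. 1 \<le> f v \<and> dist F u v \<le> f v"
      using xs(3,4) surplus_nonneg[OF u] by (intro bexI[of _ "last xs"]) auto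
  qed (use fd in \<open>simp add: dom_broadcast_def\<close>)
  then show thesis using that F(2) by blast
qed

lemma dom_broadcast_supergraph:
  assumes "F \<subseteq> E" "connected_graph V F" "dom_broadcast V F k f"
  shows "dom_broadcast V E k f"
  using assms dist_subgraph_le[OF assms(1,2)] unfolding dom_broadcast_def by (meson le_trans)

lemma finite_broadcast_costs:
  assumes "finite V"
  shows "finite {broadcast_cost V f | f. dom_broadcast V E k f}"
proof (rule finite_subset[of _ "{..card V * k}"])
  show "{broadcast_cost V f | f. dom_broadcast V E k f} \<subseteq> {..card V * k}"
    using sum_bounded_above[of V _ k]
    unfolding broadcast_cost_def dom_broadcast_def by fastforce
qed simp

lemma gamma_Bk_le:
  assumes "finite V" "dom_broadcast V E k f"
  shows "gamma_Bk V E k \<le> broadcast_cost V f"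
  unfolding gamma_Bk_def using assms finite_broadcast_costs[OF assms(1)] by (intro Min_le) auto

lemma gamma_Bk_attained:
  assumes "finite V" "1 \<le> k"
  obtains f where "dom_broadcast V E k f" "broadcast_cost V f = gamma_Bk V E k"
proof -
  have "dom_broadcast V E k (\<lambda>_. 1)"
    unfolding dom_broadcast_def
  proof (intro conjI ballI)
    fix u assume "u \<in> V"
    then show "\<exists>v\<in>V. 1 \<le> (1::nat) \<and> dist E u v \<le> 1"
      by (intro bexI[of _ u]) simp_all
  qed (use assms(2) in simp)
  then have "gamma_Bk V E k \<in> {broadcast_cost V f | f. dom_broadcast V E k f}"
    unfolding gamma_Bk_def using finite_broadcast_costs[OF assms(1)] by (intro Min_in) auto
  then show thesis using that by auto
qed

lemma gamma_Bk_le_connected_subgraph: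
  assumes "finite V" "1 \<le> k" "F \<subseteq> E" "connected_graph V F"
  shows "gamma_Bk V E k \<le> gamma_Bk V F k"
proof -
  obtain g where "dom_broadcast V F k g" "broadcast_cost V g = gamma_Bk V F k"
    using gamma_Bk_attained[OF assms(1,2)] by blast
  then show ?thesis
    using dom_broadcast_supergraph[OF assms(3,4)] gamma_Bk_le[OF assms(1)] by metis
qed

lemma spanning_tree_gamma_Bk_le:
  assumes "simple_graph V E" "connected_graph V E" "1 \<le> k"
  obtains T where "spanning_tree V E T" "gamma_Bk V T k \<le> gamma_Bk V E k"
proof -
  have finV: "finite V" using assms(1) unfolding simple_graph_def by blast
  obtain f where f: "dom_broadcast V E k f" "broadcast_cost V f = gamma_Bk V E k"
    using gamma_Bk_attained[OF finV assms(3)] by blast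
  obtain T where "spanning_tree V E T" "dom_broadcast V T k f"
    using dom_broadcast_on_spanning_tree[OF assms(1,2) f(1)] by blast
  then show thesis
    using that gamma_Bk_le[OF finV] f(2) by metis
qed

theorem theorem2:
  fixes V :: "'a set" and E :: "'a set set" and k :: nat
  assumes "simple_graph V E" and "connected_graph V E" and "k \<ge> 3"
  shows "gamma_Bk V E k = Min {gamma_Bk V F k | F. spanning_tree V E F}"
proof -
  \<comment> \<open>\<open>k \<ge> 3\<close> is only needed as \<open>k \<ge> 1\<close>: the argument works for every \<open>k \<ge> 1\<close>.\<close>
  have finV: "finite V" and k: "1 \<le> k"
    using assms(1,3) unfolding simple_graph_def by auto
  have lower: "gamma_Bk V E k \<le> gamma_Bk V T k" if "spanning_tree V E T" for T
    using that gamma_Bk_le_connected_subgraph[OF finV k]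
    unfolding spanning_tree_def is_tree_def by blast
  obtain T where T: "spanning_tree V E T" "gamma_Bk V T k \<le> gamma_Bk V E k"
    using spanning_tree_gamma_Bk_le[OF assms(1,2) k] .
  then have "gamma_Bk V E k \<in> {gamma_Bk V F k | F. spanning_tree V E F}"
    using lower[OF T(1)] by (intro CollectI exI[of _ T]) simp
  moreover have "finite {gamma_Bk V F k | F. spanning_tree V E F}"
    using simple_graph_finite_edges[OF assms(1)]
    unfolding spanning_tree_def by (simp add: setcompr_eq_image finite_subset[of _ "Pow E"])
  ultimately show ?thesis
    using lower by (intro Min_eqI[symmetric]) auto
qed

end
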